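(* Let $N\ge2$, $\alpha\in(0,\infty)^{N+1}$ and $\tilde\alpha=\sum_{n=1}^N\alpha_n$. For every $d\in\mathbb Z_+$, $$\tilde\Lambda_{d+1}=(2d+\tilde\alpha+\tilde\Lambda_d)\cup\{0[C(N,d+1)-C(N,d)]\}$$ as multisets, where $C(N,d)=\binom{d+N-1}{d}$.
   Context: $\mathscr H_d$ is the space of homogeneous polynomials of total degree $d$ in $x_1,\dots,x_N$ (so $\dim\mathscr H_d=C(N,d)$). Let $\tilde L=\sum_{n=1}^N(x_n\partial_n^2+\alpha_n\partial_n)$, which maps $\mathscr H_d$ into $\mathscr H_{d-1}$, and $|x|_1=\sum_{n=1}^Nx_n$. $\tilde\Lambda_d$ is the spectrum, as a multiset (eigenvalues with multiplicities), of the operator $\psi\mapsto|x|_1\tilde L\psi$ on $\mathscr H_d$. For a multiset $S$ and $c\in\mathbb R$, $c+S$ denotes the multiset $\{c+s:s\in S\}$; $\{0[l]\}$ denotes $0$ repeated $l$ times; $\cup$ is multiset union. *)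

theory Defs
  imports "Jordan_Normal_Form.Char_Poly" "HOL-Computational_Algebra.Polynomial"
begin

text \<open>Polynomials in x_1,...,x_N are represented by their coefficient maps:
  an exponent vector is a function a :: nat => nat (a n = exponent of x_n,
  only n in {1..N} used), and a polynomial is a map from exponent vectors to
  real coefficients.\<close>

type_synonym expo = "nat \<Rightarrow> nat"
type_synonym cpoly = "expo \<Rightarrow> real"

definition mono_set :: "nat \<Rightarrow> nat \<Rightarrow> expo set" where
  "mono_set N d = {a. (\<forall>n. n \<notin> {1..N} \<longrightarrow> a n = 0) \<and> (\<Sum>n=1..N. a n) = d}"

definition pderiv_n :: "nat \<Rightarrow> cpoly \<Rightarrow> cpoly" where
  "pderiv_n n p = (\<lambda>a. real (a n + 1) * p (a(n := a n + 1)))"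

definition mulx :: "nat \<Rightarrow> cpoly \<Rightarrow> cpoly" where
  "mulx n p = (\<lambda>a. if a n = 0 then 0 else p (a(n := a n - 1)))"

definition Ltilde :: "nat \<Rightarrow> (nat \<Rightarrow> real) \<Rightarrow> cpoly \<Rightarrow> cpoly" where
  "Ltilde N \<alpha> p = (\<lambda>a. \<Sum>n=1..N. mulx n (pderiv_n n (pderiv_n n p)) a + \<alpha> n * pderiv_n n p a)"

definition mul_abs1 :: "nat \<Rightarrow> cpoly \<Rightarrow> cpoly" where
  "mul_abs1 N p = (\<lambda>a. \<Sum>n=1..N. mulx n p a)"

definition monomial_c :: "expo \<Rightarrow> cpoly" where
  "monomial_c b = (\<lambda>a. if a = b then 1 else 0)"

definition mono_list :: "nat \<Rightarrow> nat \<Rightarrow> expo list" where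
  "mono_list N d = (SOME xs. distinct xs \<and> set xs = mono_set N d)"

definition op_matrix :: "nat \<Rightarrow> (nat \<Rightarrow> real) \<Rightarrow> nat \<Rightarrow> real mat" where
  "op_matrix N \<alpha> d =
     (let ms = mono_list N d in
      mat (length ms) (length ms)
        (\<lambda>(i, j). mul_abs1 N (Ltilde N \<alpha> (monomial_c (ms ! j))) (ms ! i)))"

definition Lambda_tilde :: "nat \<Rightarrow> (nat \<Rightarrow> real) \<Rightarrow> nat \<Rightarrow> complex multiset" where
  "Lambda_tilde N \<alpha> d = proots (char_poly (map_mat complex_of_real (op_matrix N \<alpha> d)))"

definition Cdim :: "nat \<Rightarrow> nat \<Rightarrow> nat" where
  "Cdim N d = (d + N - 1) choose d"

end

theory Submission
  imports Defs "Jordan_Normal_Form.Schur_Decomposition"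
begin

text \<open>Write \<open>M\<close> for multiplication by \<open>|x|\<^sub>1\<close>, mapping \<open>\<H>\<^sub>d\<close> to \<open>\<H>\<^sub>d\<^sub>+\<^sub>1\<close>, and \<open>L\<close> for
  \<open>L\<^sup>~\<close>, mapping \<open>\<H>\<^sub>d\<^sub>+\<^sub>1\<close> to \<open>\<H>\<^sub>d\<close>. The operator on \<open>\<H>\<^sub>d\<^sub>+\<^sub>1\<close> is \<open>M L\<close>. The
  commutation relation \<open>L M = M L + 2E + \<alpha>\<^sup>~\<close>, with \<open>E\<close> the Euler operator (which is \<open>d\<close>
  on \<open>\<H>\<^sub>d\<close>), shows that \<open>L M\<close> is the operator on \<open>\<H>\<^sub>d\<close> shifted by \<open>2d + \<alpha>\<^sup>~\<close>. By
  Sylvester's determinant identity \<open>M L\<close> and \<open>L M\<close> have the same characteristic polynomial up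
  to a power of the variable, which accounts for the extra zero eigenvalues.\<close>

lemma char_poly_zero_mat: "char_poly (0\<^sub>m n n :: 'a::comm_ring_1 mat) = [:0, 1:] ^ n"
proof -
  have "char_poly (0\<^sub>m n n :: 'a mat) = (\<Prod>a \<leftarrow> diag_mat (0\<^sub>m n n :: 'a mat). [:- a, 1:])"
    by (rule char_poly_upper_triangular[of _ n]) (auto simp: upper_triangular_def)
  also have "diag_mat (0\<^sub>m n n :: 'a mat) = replicate n 0"
    by (auto simp: diag_mat_def list_eq_iff_nth_eq)
  finally show ?thesis by (simp add: prod_list_replicate)
qed

lemma char_poly_mult_swap:
  fixes A B :: "complex mat"
  assumes A: "A \<in> carrier_mat p q" and B: "B \<in> carrier_mat q p"
  shows "char_poly (A * B) * [:0, 1:] ^ q = [:0, 1:] ^ p * char_poly (B * A)"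
proof -
  define X where "X = four_block_mat (A * B) (0\<^sub>m p q) B (0\<^sub>m q q)"
  define Y where "Y = four_block_mat (0\<^sub>m p p) (0\<^sub>m p q) B (B * A)"
  define P where "P = four_block_mat (1\<^sub>m p) A (0\<^sub>m q p) (1\<^sub>m q)"
  define Q where "Q = four_block_mat (1\<^sub>m p) (- A) (0\<^sub>m q p) (1\<^sub>m q)"
  have AB: "A * B \<in> carrier_mat p p" and BA: "B * A \<in> carrier_mat q q" using A B by auto
  have Xc: "X \<in> carrier_mat (p + q) (p + q)" unfolding X_def using AB B by auto
  have Yc: "Y \<in> carrier_mat (p + q) (p + q)" unfolding Y_def using BA B by auto
  have Pc: "P \<in> carrier_mat (p + q) (p + q)" unfolding P_def using A by auto
  have Qc: "Q \<in> carrier_mat (p + q) (p + q)" unfolding Q_def using A by auto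
  have one: "- 0\<^sub>m q q + 1\<^sub>m q = (1\<^sub>m q :: complex mat)" by (rule eq_matI) auto
  have zero: "A + - A = 0\<^sub>m p q" using A by (intro eq_matI) auto
  have PQ: "P * Q = 1\<^sub>m (p + q)" and QP: "Q * P = 1\<^sub>m (p + q)"
    unfolding P_def Q_def
    by (subst mult_four_block_mat[of _ p p _ q _ q], insert A, auto simp: one zero)+
  have XP: "X * P = P * Y"
    unfolding P_def X_def Y_def
    by (subst mult_four_block_mat[of _ p p _ q _ q], insert A B, auto,
        subst mult_four_block_mat[of _ p p _ q _ q], insert A B,
        auto simp: assoc_mult_mat[of _ p q _ p _ q])
  have "X = X * P * Q" using PQ Xc Pc Qc by (simp add: assoc_mult_mat[of _ "p + q" "p + q"])
  with XP have "X = P * Y * Q" by simp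
  with Xc Yc Pc Qc PQ QP have "similar_mat_wit X Y P Q"
    unfolding similar_mat_wit_def by (simp add: Let_def)
  hence "similar_mat X Y" unfolding similar_mat_def by blast
  hence "char_poly X = char_poly Y" by (rule char_poly_similar)
  moreover have linear: "\<exists>es. char_poly M = (\<Prod>a \<leftarrow> es. [:- a, 1:])" if "M \<in> carrier_mat n n" for M :: "complex mat" and n
    using char_poly_factorized[OF that] by blast
  moreover have "char_poly X = char_poly (A * B) * char_poly (0\<^sub>m q q :: complex mat)"
    by (rule char_poly_0_block'[OF X_def linear[OF AB] linear[OF zero_carrier_mat] AB B zero_carrier_mat])
  moreover have "char_poly Y = char_poly (0\<^sub>m p p :: complex mat) * char_poly (B * A)"
    by (rule char_poly_0_block'[OF Y_def linear[OF zero_carrier_mat] linear[OF BA] zero_carrier_mat B BA])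
  ultimately show ?thesis by (simp add: char_poly_zero_mat)
qed

lemma proots_char_poly_mult_swap:
  fixes A B :: "complex mat"
  assumes A: "A \<in> carrier_mat p q" and B: "B \<in> carrier_mat q p" and "q \<le> p"
  shows "proots (char_poly (A * B)) = proots (char_poly (B * A)) + replicate_mset (p - q) 0"
proof -
  have "char_poly (A * B) \<noteq> 0" "char_poly (B * A) \<noteq> 0"
    using degree_monic_char_poly[of "A * B" p] degree_monic_char_poly[of "B * A" q] A B by auto
  moreover have "proots ([:0, 1:] ^ k :: complex poly) = replicate_mset k 0" for k
    by (simp add: proots_power)
  ultimately have "proots (char_poly (A * B)) + replicate_mset q 0
      = replicate_mset p 0 + proots (char_poly (B * A))"
    using arg_cong[OF char_poly_mult_swap[OF A B], of proots] by (simp add: proots_mult)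
  also have "replicate_mset p (0 :: complex) = replicate_mset (p - q) 0 + replicate_mset q 0"
    using \<open>q \<le> p\<close> by (auto simp: multiset_eq_iff)
  finally show ?thesis by (simp add: ac_simps)
qed

lemma char_poly_add_scalar_mat:
  fixes T :: "'a::comm_ring_1 mat"
  assumes T: "T \<in> carrier_mat n n"
  shows "char_poly (T + c \<cdot>\<^sub>m 1\<^sub>m n) = pcompose (char_poly T) [:- c, 1:]"
proof -
  have hom: "comm_ring_hom (\<lambda>p. pcompose p [:- c, 1:])"
    by unfold_locales (auto simp: pcompose_add pcompose_mult pcompose_1)
  have "char_poly_matrix (T + c \<cdot>\<^sub>m 1\<^sub>m n) = map_mat (\<lambda>p. pcompose p [:- c, 1:]) (char_poly_matrix T)"
    using T by (intro eq_matI) (auto simp: char_poly_matrix_def pcompose_pCons)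
  thus ?thesis unfolding char_poly_def using comm_ring_hom.hom_det[OF hom] by simp
qed

lemma proots_prod_linear_factors: "proots (\<Prod>a \<leftarrow> as. [:- a, 1:]) = mset (as :: 'a::idom list)"
proof (induction as)
  case (Cons a as)
  have "(\<Prod>a \<leftarrow> as. [:- a, 1:]) \<noteq> 0"
    by (auto simp: prod_list_zero_iff)
  moreover have "(\<Prod>a \<leftarrow> a # as. [:- a, 1:]) = [:- a, 1:] * (\<Prod>a \<leftarrow> as. [:- a, 1:])"
    by simp
  ultimately have "proots (\<Prod>a \<leftarrow> a # as. [:- a, 1:]) = proots [:- a, 1:] + proots (\<Prod>a \<leftarrow> as. [:- a, 1:])"
    by (simp only:) (rule proots_mult, auto)
  with Cons show ?case by simp
qed simp

lemma proots_char_poly_add_scalar_mat: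
  fixes T :: "complex mat"
  assumes T: "T \<in> carrier_mat n n"
  shows "proots (char_poly (T + c \<cdot>\<^sub>m 1\<^sub>m n)) = image_mset ((+) c) (proots (char_poly T))"
proof -
  obtain as where as: "char_poly T = (\<Prod>a \<leftarrow> as. [:- a, 1:])"
    using char_poly_factorized[OF T] by blast
  have "pcompose (\<Prod>a \<leftarrow> as. [:- a, 1:]) [:- c, 1:] = (\<Prod>a \<leftarrow> map ((+) c) as. [:- a, 1:])"
    by (induction as) (simp_all add: pcompose_mult pcompose_pCons pcompose_1 del: mult_pCons_left)
  thus ?thesis
    using proots_prod_linear_factors[of "map ((+) c) as"]
    by (simp add: char_poly_add_scalar_mat[OF T] as proots_prod_linear_factors)
qed

lemma pderiv_n_add: "pderiv_n n (\<lambda>a. f a + g a) = (\<lambda>a. pderiv_n n f a + pderiv_n n g a)"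
  by (simp add: pderiv_n_def algebra_simps)

lemma pderiv_n_sum: "pderiv_n n (\<lambda>a. \<Sum>i\<in>I. f i a) = (\<lambda>a. \<Sum>i\<in>I. pderiv_n n (f i) a)"
  by (simp add: pderiv_n_def sum_distrib_left)

lemma pderiv_n_scale: "pderiv_n n (\<lambda>a. c * f a) = (\<lambda>a. c * pderiv_n n f a)"
  by (simp add: pderiv_n_def algebra_simps)

lemma mulx_add: "mulx n (\<lambda>a. f a + g a) = (\<lambda>a. mulx n f a + mulx n g a)"
  by (simp add: mulx_def fun_eq_iff)

lemma mulx_sum: "mulx n (\<lambda>a. \<Sum>i\<in>I. f i a) = (\<lambda>a. \<Sum>i\<in>I. mulx n (f i) a)"
  by (simp add: mulx_def fun_eq_iff)

lemma mulx_scale: "mulx n (\<lambda>a. c * f a) = (\<lambda>a. c * mulx n f a)"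
  by (simp add: mulx_def fun_eq_iff)

lemma mulx_zero: "mulx n (\<lambda>_. 0) = (\<lambda>_. 0)"
  by (simp add: mulx_def fun_eq_iff)

lemma mulx_commute: "mulx n (mulx m p) = mulx m (mulx n p)"
  by (cases "m = n") (auto simp: mulx_def fun_eq_iff fun_upd_twist)

lemma pderiv_n_mulx_other: "m \<noteq> n \<Longrightarrow> pderiv_n n (mulx m p) = mulx m (pderiv_n n p)"
  by (auto simp: mulx_def pderiv_n_def fun_eq_iff fun_upd_twist)

lemma pderiv_n_mulx_same: "pderiv_n n (mulx n p) = (\<lambda>a. mulx n (pderiv_n n p) a + p a)"
  by (auto simp: mulx_def pderiv_n_def fun_eq_iff algebra_simps)

lemma mulx_pderiv_n: "mulx n (pderiv_n n p) a = real (a n) * p a"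
  by (auto simp: mulx_def pderiv_n_def)

lemma pderiv_n_mul_abs1:
  assumes "n \<in> {1..N}"
  shows "pderiv_n n (mul_abs1 N p) = (\<lambda>a. mul_abs1 N (pderiv_n n p) a + p a)"
proof -
  have "pderiv_n n (mul_abs1 N p) = (\<lambda>a. \<Sum>m\<in>{1..N}. pderiv_n n (mulx m p) a)"
    unfolding mul_abs1_def by (rule pderiv_n_sum)
  also have "\<dots> = (\<lambda>a. \<Sum>m\<in>{1..N}. mulx m (pderiv_n n p) a + (if m = n then p a else 0))"
    by (intro ext sum.cong refl) (auto simp: pderiv_n_mulx_other pderiv_n_mulx_same)
  finally show ?thesis
    using assms by (simp add: sum.distrib mul_abs1_def)
qed

lemma mulx_mul_abs1: "mulx n (mul_abs1 N p) = mul_abs1 N (mulx n p)"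
  unfolding mul_abs1_def mulx_sum by (simp add: mulx_commute)

lemma Ltilde_mul_abs1:
  "Ltilde N \<alpha> (mul_abs1 N p) a =
     mul_abs1 N (Ltilde N \<alpha> p) a + (2 * (\<Sum>n=1..N. real (a n)) + (\<Sum>n=1..N. \<alpha> n)) * p a"
proof -
  define D1 where "D1 n = pderiv_n n p" for n
  define D2 where "D2 n = pderiv_n n (D1 n)" for n
  have term_n: "mulx n (pderiv_n n (pderiv_n n (mul_abs1 N p))) a + \<alpha> n * pderiv_n n (mul_abs1 N p) a
      = (mul_abs1 N (mulx n (D2 n)) a + \<alpha> n * mul_abs1 N (D1 n) a) + (2 * real (a n) + \<alpha> n) * p a"
    if n: "n \<in> {1..N}" for n
  proof -
    have "pderiv_n n (pderiv_n n (mul_abs1 N p)) = (\<lambda>a. mul_abs1 N (D2 n) a + D1 n a + D1 n a)"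
      by (simp add: pderiv_n_mul_abs1[OF n] pderiv_n_add D1_def D2_def)
    hence "mulx n (pderiv_n n (pderiv_n n (mul_abs1 N p))) a
        = mul_abs1 N (mulx n (D2 n)) a + 2 * (real (a n) * p a)"
      by (simp add: mulx_add mulx_scale mulx_mul_abs1 D1_def mulx_pderiv_n)
    thus ?thesis by (simp add: pderiv_n_mul_abs1[OF n] D1_def algebra_simps)
  qed
  have "Ltilde N \<alpha> (mul_abs1 N p) a = (\<Sum>n=1..N. (mul_abs1 N (mulx n (D2 n)) a
      + \<alpha> n * mul_abs1 N (D1 n) a) + (2 * real (a n) + \<alpha> n) * p a)"
    unfolding Ltilde_def by (rule sum.cong[OF refl term_n])
  also have "\<dots> = (\<Sum>n=1..N. mul_abs1 N (mulx n (D2 n)) a + \<alpha> n * mul_abs1 N (D1 n) a)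
      + (2 * (\<Sum>n=1..N. real (a n)) + (\<Sum>n=1..N. \<alpha> n)) * p a"
    by (simp add: sum.distrib sum_distrib_left sum_distrib_right algebra_simps)
  also have "(\<Sum>n=1..N. mul_abs1 N (mulx n (D2 n)) a + \<alpha> n * mul_abs1 N (D1 n) a)
      = (\<Sum>n=1..N. \<Sum>m=1..N. mulx m (mulx n (D2 n)) a + \<alpha> n * mulx m (D1 n) a)"
    by (simp add: mul_abs1_def sum.distrib sum_distrib_left)
  also have "\<dots> = mul_abs1 N (Ltilde N \<alpha> p) a"
    unfolding mul_abs1_def Ltilde_def mulx_sum mulx_add mulx_scale D2_def D1_def by (rule sum.swap)
  finally show ?thesis .
qed

lemma mul_abs1_lincomb:
  "mul_abs1 N (\<lambda>a. \<Sum>c\<in>S. f c * g c a) b = (\<Sum>c\<in>S. f c * mul_abs1 N (g c) b)"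
  unfolding mul_abs1_def mulx_sum mulx_scale by (simp add: sum_distrib_left, rule sum.swap)

lemma Ltilde_lincomb:
  "Ltilde N \<alpha> (\<lambda>a. \<Sum>c\<in>S. f c * g c a) b = (\<Sum>c\<in>S. f c * Ltilde N \<alpha> (g c) b)"
  unfolding Ltilde_def pderiv_n_sum pderiv_n_scale mulx_sum mulx_scale
  by (simp add: sum_distrib_left sum.distrib algebra_simps) (simp only: sum.swap[of _ "{Suc 0..N}" S])


definition supported_on :: "cpoly \<Rightarrow> expo set \<Rightarrow> bool" where
  "supported_on p S \<longleftrightarrow> (\<forall>a. p a \<noteq> 0 \<longrightarrow> a \<in> S)"

lemma supported_on_monomial_c: "b \<in> S \<Longrightarrow> supported_on (monomial_c b) S"
  unfolding supported_on_def monomial_c_def by auto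

lemma supported_on_sum:
  "finite I \<Longrightarrow> (\<And>i. i \<in> I \<Longrightarrow> supported_on (f i) S) \<Longrightarrow> supported_on (\<lambda>a. \<Sum>i\<in>I. f i a) S"
  unfolding supported_on_def by (metis (mono_tags, lifting) sum.neutral)

lemma supported_on_add: "supported_on f S \<Longrightarrow> supported_on g S \<Longrightarrow> supported_on (\<lambda>a. f a + g a) S"
  unfolding supported_on_def by (metis add.right_neutral)

lemma supported_on_scale: "supported_on f S \<Longrightarrow> supported_on (\<lambda>a. c * f a) S"
  unfolding supported_on_def by auto

lemma cpoly_monomial_expansion:
  assumes "finite S" "supported_on p S"
  shows "p = (\<lambda>a. \<Sum>c\<in>S. p c * monomial_c c a)"
proof
  fix a
  show "p a = (\<Sum>c\<in>S. p c * monomial_c c a)"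
  proof (cases "a \<in> S")
    case True
    have "(\<Sum>c\<in>S. p c * monomial_c c a) = (\<Sum>c\<in>S. if c = a then p c else 0)"
      by (intro sum.cong refl) (auto simp: monomial_c_def)
    thus ?thesis using True assms(1) by simp
  next
    case False
    with assms(2) have "p a = 0" unfolding supported_on_def by blast
    moreover have "(\<Sum>c\<in>S. p c * monomial_c c a) = 0"
      using False by (intro sum.neutral) (auto simp: monomial_c_def)
    ultimately show ?thesis by simp
  qed
qed

lemma sum_fun_upd_add:
  assumes "finite A" "n \<in> A"
  shows "sum (a(n := x)) A + a n = sum a A + (x :: 'b::comm_monoid_add)"
proof -
  have "sum (a(n := x)) (A - {n}) = sum a (A - {n})" by (intro sum.cong) auto
  thus ?thesis using assms by (simp add: sum.remove ac_simps)
qed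

lemma pderiv_n_supported_on:
  assumes n: "n \<in> {1..N}" and p: "supported_on p (mono_set N (Suc k))"
  shows "supported_on (pderiv_n n p) (mono_set N k)"
  unfolding supported_on_def
proof (intro allI impI)
  fix a assume "pderiv_n n p a \<noteq> 0"
  hence "a(n := a n + 1) \<in> mono_set N (Suc k)"
    using p unfolding supported_on_def pderiv_n_def by auto
  moreover have "sum (a(n := a n + 1)) {1..N} + a n = sum a {1..N} + (a n + 1)"
    using n by (intro sum_fun_upd_add) auto
  ultimately show "a \<in> mono_set N k" using n unfolding mono_set_def by (auto split: if_splits)
qed

lemma pderiv_n_supported_on_zero:
  assumes n: "n \<in> {1..N}" and p: "supported_on p (mono_set N 0)"
  shows "pderiv_n n p = (\<lambda>_. 0)"
proof
  fix a :: expo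
  have "sum (a(n := a n + 1)) {1..N} + a n = sum a {1..N} + (a n + 1)"
    using n by (intro sum_fun_upd_add) auto
  hence "a(n := a n + 1) \<notin> mono_set N 0" unfolding mono_set_def by auto
  thus "pderiv_n n p a = 0" using p unfolding supported_on_def pderiv_n_def by auto
qed

lemma mulx_supported_on:
  assumes n: "n \<in> {1..N}" and p: "supported_on p (mono_set N k)"
  shows "supported_on (mulx n p) (mono_set N (Suc k))"
  unfolding supported_on_def
proof (intro allI impI)
  fix a assume "mulx n p a \<noteq> 0"
  hence an: "a n \<noteq> 0" and "a(n := a n - 1) \<in> mono_set N k"
    using p unfolding supported_on_def mulx_def by (auto split: if_splits)
  moreover have "sum (a(n := a n - 1)) {1..N} + a n = sum a {1..N} + (a n - 1)"
    using n by (intro sum_fun_upd_add) auto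
  ultimately show "a \<in> mono_set N (Suc k)" using n unfolding mono_set_def by (auto split: if_splits)
qed

lemma mul_abs1_supported_on:
  "supported_on p (mono_set N k) \<Longrightarrow> supported_on (mul_abs1 N p) (mono_set N (Suc k))"
  unfolding mul_abs1_def by (intro supported_on_sum mulx_supported_on) auto

lemma Ltilde_supported_on:
  assumes p: "supported_on p (mono_set N (Suc k))"
  shows "supported_on (Ltilde N \<alpha> p) (mono_set N k)"
  unfolding Ltilde_def
proof (intro supported_on_sum supported_on_add supported_on_scale)
  fix n assume n: "n \<in> {1..N}"
  show "supported_on (pderiv_n n p) (mono_set N k)"
    by (rule pderiv_n_supported_on[OF n p])
  show "supported_on (mulx n (pderiv_n n (pderiv_n n p))) (mono_set N k)"
  proof (cases k)
    case 0
    have "pderiv_n n (pderiv_n n p) = (\<lambda>_. 0)"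
      using p unfolding 0 by (intro pderiv_n_supported_on_zero[OF n] pderiv_n_supported_on[OF n])
    thus ?thesis by (simp add: mulx_zero supported_on_def)
  next
    case (Suc j)
    show ?thesis
      using p unfolding Suc by (intro mulx_supported_on[OF n] pderiv_n_supported_on[OF n])
  qed
qed simp

lemma mono_set_bij_lists:
  "bij_betw (\<lambda>a. map a [1..<N+1]) (mono_set N d) {l. length l = N \<and> sum_list l = d}"
proof (rule bij_betw_byWitness[where f' = "\<lambda>l n. if n \<in> {1..N} then l ! (n - 1) else 0"])
  have sum_map: "sum_list (map a [Suc 0..<Suc N]) = sum a {Suc 0..N}" for a :: expo
    using sum_set_upt_conv_sum_list_nat[of a "Suc 0" "Suc N"]
    by (simp add: atLeastLessThanSuc_atLeastAtMost del: upt_Suc)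
  have map_inv: "map (\<lambda>n. if n \<in> {1..N} then l ! (n - 1) else 0) [1..<N+1] = l"
    if "length l = N" for l :: "nat list"
    using that by (auto simp: list_eq_iff_nth_eq simp del: upt_Suc)
  show "\<forall>a\<in>mono_set N d. (\<lambda>n. if n \<in> {1..N} then map a [1..<N+1] ! (n - 1) else 0) = a"
    by (auto simp: mono_set_def fun_eq_iff nth_map simp del: upt_Suc)
  show "\<forall>l\<in>{l. length l = N \<and> sum_list l = d}.
      map (\<lambda>n. if n \<in> {1..N} then l ! (n - 1) else 0) [1..<N+1] = l"
    using map_inv by auto
  show "(\<lambda>a. map a [1..<N+1]) ` mono_set N d \<subseteq> {l. length l = N \<and> sum_list l = d}"
    by (auto simp: mono_set_def sum_map simp del: upt_Suc)
  show "(\<lambda>l n. if n \<in> {1..N} then l ! (n - 1) else 0) ` {l. length l = N \<and> sum_list l = d}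
      \<subseteq> mono_set N d"
  proof
    fix a assume "a \<in> (\<lambda>l n. if n \<in> {1..N} then l ! (n - 1) else 0) ` {l. length l = N \<and> sum_list l = d}"
    then obtain l where l: "length l = N" "sum_list l = d"
      and a: "a = (\<lambda>n. if n \<in> {1..N} then l ! (n - 1) else 0)" by auto
    have "sum a {Suc 0..N} = sum_list (map a [Suc 0..<Suc N])" by (rule sum_map[symmetric])
    also have "map a [Suc 0..<Suc N] = l" unfolding a using map_inv[OF l(1)] by simp
    finally show "a \<in> mono_set N d" using l a unfolding mono_set_def by auto
  qed
qed

lemma finite_mono_set: "finite (mono_set N d)"
proof -
  have "{l. length l = N \<and> sum_list l = d} \<subseteq> {l. set l \<subseteq> {0..d} \<and> length l = N}"
    using member_le_sum_list by fastforce
  hence "finite {l. length l = N \<and> sum_list l = d}"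
    by (rule finite_subset) (simp add: finite_lists_length_eq)
  thus ?thesis using bij_betw_finite[OF mono_set_bij_lists] by blast
qed

lemma card_mono_set: "card (mono_set N d) = Cdim N d"
  using bij_betw_same_card[OF mono_set_bij_lists] card_length_sum_list unfolding Cdim_def by simp

lemma mono_list: "distinct (mono_list N d)" "set (mono_list N d) = mono_set N d"
proof -
  have "\<exists>xs. distinct xs \<and> set xs = mono_set N d"
    using finite_distinct_list[OF finite_mono_set] by blast
  hence "distinct (mono_list N d) \<and> set (mono_list N d) = mono_set N d"
    unfolding mono_list_def by (rule someI_ex)
  thus "distinct (mono_list N d)" "set (mono_list N d) = mono_set N d" by blast+
qed

lemma length_mono_list: "length (mono_list N d) = Cdim N d"
  using mono_list card_mono_set distinct_card by metis

lemma Cdim_le_Cdim_Suc: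
  assumes "1 \<le> N"
  shows "Cdim N d \<le> Cdim N (Suc d)"
proof -
  have "Suc d + N - 1 = Suc (d + N - 1)" using assms by simp
  moreover have "(d + N - 1 choose d) \<le> Suc (d + N - 1) choose Suc d" by simp
  ultimately show ?thesis unfolding Cdim_def by (simp only:)
qed


lemma sum_set_conv_sum_nth: "distinct xs \<Longrightarrow> sum f (set xs) = (\<Sum>k\<in>{0..<length xs}. f (xs ! k))"
  by (simp add: sum.distinct_set_conv_list sum_list_sum_nth)

definition mul_abs1_mat :: "nat \<Rightarrow> nat \<Rightarrow> real mat" where
  "mul_abs1_mat N d = (let bs = mono_list N (Suc d); cs = mono_list N d in
     mat (length bs) (length cs) (\<lambda>(i, k). mul_abs1 N (monomial_c (cs ! k)) (bs ! i)))"

definition Ltilde_mat :: "nat \<Rightarrow> (nat \<Rightarrow> real) \<Rightarrow> nat \<Rightarrow> real mat" where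
  "Ltilde_mat N \<alpha> d = (let bs = mono_list N (Suc d); cs = mono_list N d in
     mat (length cs) (length bs) (\<lambda>(k, j). Ltilde N \<alpha> (monomial_c (bs ! j)) (cs ! k)))"

lemma op_matrix_carrier: "op_matrix N \<alpha> d \<in> carrier_mat (Cdim N d) (Cdim N d)"
  by (simp add: op_matrix_def Let_def length_mono_list)

lemma mul_abs1_mat_carrier: "mul_abs1_mat N d \<in> carrier_mat (Cdim N (Suc d)) (Cdim N d)"
  by (simp add: mul_abs1_mat_def Let_def length_mono_list)

lemma Ltilde_mat_carrier: "Ltilde_mat N \<alpha> d \<in> carrier_mat (Cdim N d) (Cdim N (Suc d))"
  by (simp add: Ltilde_mat_def Let_def length_mono_list)

lemma op_matrix_Suc: "op_matrix N \<alpha> (Suc d) = mul_abs1_mat N d * Ltilde_mat N \<alpha> d"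
proof (rule eq_matI)
  let ?bs = "mono_list N (Suc d)" and ?cs = "mono_list N d"
  fix i j assume "i < dim_row (mul_abs1_mat N d * Ltilde_mat N \<alpha> d)"
    and "j < dim_col (mul_abs1_mat N d * Ltilde_mat N \<alpha> d)"
  hence i: "i < length ?bs" and j: "j < length ?bs"
    by (simp_all add: mul_abs1_mat_def Ltilde_mat_def Let_def)
  let ?Lb = "Ltilde N \<alpha> (monomial_c (?bs ! j))"
  have "(mul_abs1_mat N d * Ltilde_mat N \<alpha> d) $$ (i, j)
      = (\<Sum>k\<in>{0..<length ?cs}. ?Lb (?cs ! k) * mul_abs1 N (monomial_c (?cs ! k)) (?bs ! i))"
    using i j by (auto simp: mul_abs1_mat_def Ltilde_mat_def Let_def scalar_prod_def intro!: sum.cong)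
  also have "\<dots> = (\<Sum>c\<in>mono_set N d. ?Lb c * mul_abs1 N (monomial_c c) (?bs ! i))"
    by (simp add: sum_set_conv_sum_nth mono_list flip: mono_list(2))
  also have "\<dots> = mul_abs1 N (\<lambda>a. \<Sum>c\<in>mono_set N d. ?Lb c * monomial_c c a) (?bs ! i)"
    by (rule mul_abs1_lincomb[symmetric])
  also have "(\<lambda>a. \<Sum>c\<in>mono_set N d. ?Lb c * monomial_c c a) = ?Lb"
    using j mono_list(2)[of N "Suc d"]
    by (intro cpoly_monomial_expansion[symmetric] finite_mono_set Ltilde_supported_on
        supported_on_monomial_c) auto
  finally show "op_matrix N \<alpha> (Suc d) $$ (i, j) = (mul_abs1_mat N d * Ltilde_mat N \<alpha> d) $$ (i, j)"
    using i j by (simp add: op_matrix_def Let_def)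
qed (simp_all add: op_matrix_def mul_abs1_mat_def Ltilde_mat_def Let_def)

text \<open>Here the commutation relation enters: on \<open>\<H>\<^sub>d\<close> the Euler operator acts as \<open>d\<close>.\<close>

lemma Ltilde_mat_mult_mul_abs1_mat:
  "Ltilde_mat N \<alpha> d * mul_abs1_mat N d
     = op_matrix N \<alpha> d + (2 * real d + (\<Sum>n=1..N. \<alpha> n)) \<cdot>\<^sub>m 1\<^sub>m (Cdim N d)"
proof (rule eq_matI)
  let ?bs = "mono_list N (Suc d)" and ?cs = "mono_list N d"
  fix i j assume "i < dim_row (op_matrix N \<alpha> d + (2 * real d + (\<Sum>n=1..N. \<alpha> n)) \<cdot>\<^sub>m 1\<^sub>m (Cdim N d))"
    and "j < dim_col (op_matrix N \<alpha> d + (2 * real d + (\<Sum>n=1..N. \<alpha> n)) \<cdot>\<^sub>m 1\<^sub>m (Cdim N d))"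
  hence i: "i < length ?cs" and j: "j < length ?cs"
    using op_matrix_carrier[of N \<alpha> d] by (simp_all add: length_mono_list)
  have ci: "?cs ! i \<in> mono_set N d" and cj: "?cs ! j \<in> mono_set N d"
    using i j mono_list(2)[of N d] nth_mem by blast+
  let ?Mc = "mul_abs1 N (monomial_c (?cs ! j))"
  have "(Ltilde_mat N \<alpha> d * mul_abs1_mat N d) $$ (i, j)
      = (\<Sum>k\<in>{0..<length ?bs}. ?Mc (?bs ! k) * Ltilde N \<alpha> (monomial_c (?bs ! k)) (?cs ! i))"
    using i j by (auto simp: mul_abs1_mat_def Ltilde_mat_def Let_def scalar_prod_def intro!: sum.cong)
  also have "\<dots> = (\<Sum>b\<in>mono_set N (Suc d). ?Mc b * Ltilde N \<alpha> (monomial_c b) (?cs ! i))"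
    by (simp add: sum_set_conv_sum_nth mono_list flip: mono_list(2))
  also have "\<dots> = Ltilde N \<alpha> (\<lambda>a. \<Sum>b\<in>mono_set N (Suc d). ?Mc b * monomial_c b a) (?cs ! i)"
    by (rule Ltilde_lincomb[symmetric])
  also have "(\<lambda>a. \<Sum>b\<in>mono_set N (Suc d). ?Mc b * monomial_c b a) = ?Mc"
    using cj by (intro cpoly_monomial_expansion[symmetric] finite_mono_set mul_abs1_supported_on
        supported_on_monomial_c)
  also have "Ltilde N \<alpha> ?Mc (?cs ! i) = mul_abs1 N (Ltilde N \<alpha> (monomial_c (?cs ! j))) (?cs ! i)
      + (2 * (\<Sum>n=1..N. real ((?cs ! i) n)) + (\<Sum>n=1..N. \<alpha> n)) * monomial_c (?cs ! j) (?cs ! i)"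
    by (rule Ltilde_mul_abs1)
  also have "(\<Sum>n=1..N. real ((?cs ! i) n)) = real d"
    using ci unfolding mono_set_def by (simp flip: of_nat_sum)
  also have "monomial_c (?cs ! j) (?cs ! i) = (if i = j then 1 else 0)"
    using mono_list(1)[of N d] i j unfolding monomial_c_def by (auto simp: nth_eq_iff_index_eq)
  finally show "(Ltilde_mat N \<alpha> d * mul_abs1_mat N d) $$ (i, j)
      = (op_matrix N \<alpha> d + (2 * real d + (\<Sum>n=1..N. \<alpha> n)) \<cdot>\<^sub>m 1\<^sub>m (Cdim N d)) $$ (i, j)"
    using i j by (simp add: op_matrix_def Let_def length_mono_list)
qed (use op_matrix_carrier in \<open>simp_all add: mul_abs1_mat_def Ltilde_mat_def Let_def length_mono_list\<close>)

theorem proposition4p1: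
  fixes N :: nat and \<alpha> :: "nat \<Rightarrow> real" and d :: nat
  assumes "N \<ge> 2"
    and "\<forall>n \<in> {0..N}. \<alpha> n > 0"
  shows "Lambda_tilde N \<alpha> (d + 1) =
           image_mset (\<lambda>s. complex_of_real (2 * real d + (\<Sum>n=1..N. \<alpha> n)) + s) (Lambda_tilde N \<alpha> d)
           + replicate_mset (Cdim N (d + 1) - Cdim N d) 0"
proof -
  define c where "c = 2 * real d + (\<Sum>n=1..N. \<alpha> n)"
  let ?M = "mul_abs1_mat N d" and ?L = "Ltilde_mat N \<alpha> d" and ?T = "op_matrix N \<alpha> d"
  let ?cM = "map_mat complex_of_real ?M" and ?cL = "map_mat complex_of_real ?L"
  have M: "?cM \<in> carrier_mat (Cdim N (Suc d)) (Cdim N d)"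
    and L: "?cL \<in> carrier_mat (Cdim N d) (Cdim N (Suc d))"
    and T: "map_mat complex_of_real ?T \<in> carrier_mat (Cdim N d) (Cdim N d)"
    using mul_abs1_mat_carrier Ltilde_mat_carrier op_matrix_carrier by auto
  have "Lambda_tilde N \<alpha> (d + 1) = proots (char_poly (?cM * ?cL))"
    unfolding Lambda_tilde_def
    by (simp add: op_matrix_Suc of_real_hom.mat_hom_mult[OF mul_abs1_mat_carrier Ltilde_mat_carrier])
  also have "\<dots> = proots (char_poly (?cL * ?cM)) + replicate_mset (Cdim N (d + 1) - Cdim N d) 0"
    using proots_char_poly_mult_swap[OF M L] Cdim_le_Cdim_Suc assms(1) by simp
  also have "?cL * ?cM = map_mat complex_of_real ?T + complex_of_real c \<cdot>\<^sub>m 1\<^sub>m (Cdim N d)"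
    using op_matrix_carrier[of N \<alpha> d]
    by (auto simp: of_real_hom.mat_hom_mult[OF Ltilde_mat_carrier mul_abs1_mat_carrier, symmetric]
        Ltilde_mat_mult_mul_abs1_mat c_def)
  also have "proots (char_poly \<dots>) = image_mset ((+) (complex_of_real c)) (Lambda_tilde N \<alpha> d)"
    unfolding Lambda_tilde_def by (rule proots_char_poly_add_scalar_mat[OF T])
  finally show ?thesis unfolding c_def .
qed

end
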